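(* Let $G$ be a group with generating set $S$ not containing the identity. Then every color-permuting automorphism of the Cayley color digraph of $G$ with respect to $S$ is an isometry of $G$ with respect to the cardinal metric $d_C$.
   Context: The cardinal norm is $\|x\| = \min\{|A| : A\subseteq S,\ x\in\langle A\rangle\}$, where $\langle A\rangle$ is the subgroup generated by $A$, and $d_C(g,h)=\|g^{-1}h\|$. The Cayley color digraph has vertex set $G$ and, for each $x\in G$ and $c\in S$, an arc $(x,xc)$ of color $c$. A color-permuting automorphism is a digraph automorphism $\alpha$ (bijection of $G$ with $(x,y)$ an arc iff $(\alpha(x),\alpha(y))$ is an arc) for which there is a permutation $\sigma$ of $S$ such that, for all $x,y\in G$, $(x,y)$ has color $c$ iff $(\alpha(x),\alpha(y))$ has color $\sigma(c)$. *)

theory Defs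
  imports "HOL-Algebra.Algebra"
begin

text \<open>Cardinal norm: least cardinality of a subset A of S with x in the subgroup
generated by A (such A may be taken finite, since every element of a generated
subgroup lies in the subgroup generated by finitely many generators).\<close>
definition cardinal_norm :: "('a, 'b) monoid_scheme \<Rightarrow> 'a set \<Rightarrow> 'a \<Rightarrow> nat" where
  "cardinal_norm G S x = (LEAST n. \<exists>A. A \<subseteq> S \<and> finite A \<and> card A = n \<and> x \<in> generate G A)"

definition cardinal_dist :: "('a, 'b) monoid_scheme \<Rightarrow> 'a set \<Rightarrow> 'a \<Rightarrow> 'a \<Rightarrow> nat" where
  "cardinal_dist G S g h = cardinal_norm G S (inv\<^bsub>G\<^esub> g \<otimes>\<^bsub>G\<^esub> h)"

definition cayley_has_color :: "('a, 'b) monoid_scheme \<Rightarrow> 'a set \<Rightarrow> 'a \<Rightarrow> 'a \<Rightarrow> 'a \<Rightarrow> bool" where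
  "cayley_has_color G S x y c \<longleftrightarrow> x \<in> carrier G \<and> c \<in> S \<and> y = x \<otimes>\<^bsub>G\<^esub> c"

definition cayley_arc :: "('a, 'b) monoid_scheme \<Rightarrow> 'a set \<Rightarrow> 'a \<Rightarrow> 'a \<Rightarrow> bool" where
  "cayley_arc G S x y \<longleftrightarrow> (\<exists>c\<in>S. cayley_has_color G S x y c)"

definition color_permuting_aut :: "('a, 'b) monoid_scheme \<Rightarrow> 'a set \<Rightarrow> ('a \<Rightarrow> 'a) \<Rightarrow> bool" where
  "color_permuting_aut G S \<alpha> \<longleftrightarrow>
     bij_betw \<alpha> (carrier G) (carrier G) \<and>
     (\<forall>x\<in>carrier G. \<forall>y\<in>carrier G. cayley_arc G S x y \<longleftrightarrow> cayley_arc G S (\<alpha> x) (\<alpha> y)) \<and>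
     (\<exists>\<sigma>. bij_betw \<sigma> S S \<and>
        (\<forall>x\<in>carrier G. \<forall>y\<in>carrier G. \<forall>c\<in>S.
           cayley_has_color G S x y c \<longleftrightarrow> cayley_has_color G S (\<alpha> x) (\<alpha> y) (\<sigma> c)))"

end

theory Submission
  imports Defs
begin

text \<open>A color-permuting automorphism \<alpha> with color permutation \<sigma> satisfies
\<alpha>(x c) = \<alpha>(x) \<sigma>(c). Following a word in the generators A along \<alpha> shows that
\<alpha>(g)\<inverse> \<alpha>(g x) lies in the subgroup generated by \<sigma>(A) whenever x lies in the
one generated by A; since |\<sigma>(A)| \<le> |A|, \<alpha> does not increase the cardinal
metric. The inverse of \<alpha> is again color-permuting, with color permutation \<sigma>\<inverse>,
which gives the reverse inequality.\<close>

lemma cardinal_norm_le: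
  assumes "A \<subseteq> S" and "finite A" and "x \<in> generate G A"
  shows "cardinal_norm G S x \<le> card A"
  unfolding cardinal_norm_def by (rule Least_le) (use assms in blast)

context group
begin

lemma generate_finite_subset:
  assumes "x \<in> generate G S"
  shows "\<exists>A\<subseteq>S. finite A \<and> x \<in> generate G A"
  using assms
proof (induction rule: generate.induct)
  case one
  show ?case by (blast intro: generate.one)
next
  case (incl c)
  then show ?case by (intro exI[of _ "{c}"]) (auto intro: generate.incl)
next
  case (inv c)
  then show ?case by (intro exI[of _ "{c}"]) (auto intro: generate.inv)
next
  case (eng x1 x2)
  then obtain A1 A2 where "A1 \<subseteq> S" "finite A1" "x1 \<in> generate G A1"
    and "A2 \<subseteq> S" "finite A2" "x2 \<in> generate G A2" by blast
  moreover have "generate G A1 \<subseteq> generate G (A1 \<union> A2)" "generate G A2 \<subseteq> generate G (A1 \<union> A2)"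
    by (simp_all add: mono_generate)
  ultimately show ?case by (intro exI[of _ "A1 \<union> A2"]) (auto intro: generate.eng)
qed

lemma cardinal_norm_obtain:
  assumes "x \<in> generate G S"
  obtains A where "A \<subseteq> S" and "finite A" and "card A = cardinal_norm G S x"
    and "x \<in> generate G A"
proof -
  have "\<exists>n A. A \<subseteq> S \<and> finite A \<and> card A = n \<and> x \<in> generate G A"
    using generate_finite_subset[OF assms] by blast
  from LeastI_ex[OF this] obtain A where "A \<subseteq> S" "finite A"
    "card A = cardinal_norm G S x" "x \<in> generate G A"
    unfolding cardinal_norm_def by blast
  then show thesis by (rule that)
qed

end

definition cayley_color_hom ::
    "('a, 'b) monoid_scheme \<Rightarrow> 'a set \<Rightarrow> ('a \<Rightarrow> 'a) \<Rightarrow> ('a \<Rightarrow> 'a) \<Rightarrow> bool" where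
  "cayley_color_hom G S \<beta> \<tau> \<longleftrightarrow>
     \<beta> \<in> carrier G \<rightarrow> carrier G \<and> \<tau> \<in> S \<rightarrow> S \<and>
     (\<forall>x\<in>carrier G. \<forall>c\<in>S. \<beta> (x \<otimes>\<^bsub>G\<^esub> c) = \<beta> x \<otimes>\<^bsub>G\<^esub> \<tau> c)"

context group
begin


lemma color_permuting_aut_imp_cayley_color_hom:
  assumes "color_permuting_aut G S \<alpha>" and "S \<subseteq> carrier G"
  obtains \<sigma> where "bij_betw \<sigma> S S" and "cayley_color_hom G S \<alpha> \<sigma>"
proof -
  from assms(1) obtain \<sigma> where
    \<alpha>: "bij_betw \<alpha> (carrier G) (carrier G)" and \<sigma>: "bij_betw \<sigma> S S" and
    color: "\<forall>x\<in>carrier G. \<forall>y\<in>carrier G. \<forall>c\<in>S.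
      cayley_has_color G S x y c \<longleftrightarrow> cayley_has_color G S (\<alpha> x) (\<alpha> y) (\<sigma> c)"
    unfolding color_permuting_aut_def by blast
  have "\<alpha> (x \<otimes> c) = \<alpha> x \<otimes> \<sigma> c" if "x \<in> carrier G" "c \<in> S" for x c
  proof -
    have "cayley_has_color G S x (x \<otimes> c) c"
      using that unfolding cayley_has_color_def by simp
    then have "cayley_has_color G S (\<alpha> x) (\<alpha> (x \<otimes> c)) (\<sigma> c)"
      using color that assms(2) by blast
    then show ?thesis
      unfolding cayley_has_color_def by simp
  qed
  with \<alpha> \<sigma> have "cayley_color_hom G S \<alpha> \<sigma>"
    unfolding cayley_color_hom_def by (auto dest: bij_betwE)
  with \<sigma> show thesis by (rule that)
qed

lemma cayley_color_hom_inv_into: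
  assumes "cayley_color_hom G S \<beta> \<tau>" and "S \<subseteq> carrier G"
    and \<beta>: "bij_betw \<beta> (carrier G) (carrier G)" and \<tau>: "bij_betw \<tau> S S"
  shows "cayley_color_hom G S (inv_into (carrier G) \<beta>) (inv_into S \<tau>)"
proof -
  let ?\<beta>' = "inv_into (carrier G) \<beta>" and ?\<tau>' = "inv_into S \<tau>"
  have \<beta>': "?\<beta>' \<in> carrier G \<rightarrow> carrier G" and \<tau>': "?\<tau>' \<in> S \<rightarrow> S"
    using bij_betw_inv_into[OF \<beta>] bij_betw_inv_into[OF \<tau>] by (auto dest: bij_betwE)
  have "?\<beta>' (y \<otimes> c) = ?\<beta>' y \<otimes> ?\<tau>' c" if y: "y \<in> carrier G" and c: "c \<in> S" for y c
  proof -
    have "\<beta> (?\<beta>' y \<otimes> ?\<tau>' c) = \<beta> (?\<beta>' y) \<otimes> \<tau> (?\<tau>' c)"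
      using assms(1) \<beta>' \<tau>' y c unfolding cayley_color_hom_def by blast
    also have "\<dots> = y \<otimes> c"
      using \<beta> \<tau> y c by (simp add: bij_betw_inv_into_right)
    finally have "?\<beta>' (y \<otimes> c) = ?\<beta>' (\<beta> (?\<beta>' y \<otimes> ?\<tau>' c))" by simp
    also have "\<dots> = ?\<beta>' y \<otimes> ?\<tau>' c"
      using \<beta> \<beta>' \<tau>' y c assms(2) by (auto intro!: bij_betw_inv_into_left)
    finally show ?thesis .
  qed
  with \<beta>' \<tau>' show ?thesis
    unfolding cayley_color_hom_def by blast
qed

lemma cayley_color_hom_generate:
  assumes hom: "cayley_color_hom G S \<beta> \<tau>" and S: "S \<subseteq> carrier G" and A: "A \<subseteq> S"
    and x: "x \<in> generate G A" and g: "g \<in> carrier G"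
  shows "\<exists>y\<in>generate G (\<tau> ` A). \<beta> (g \<otimes> x) = \<beta> g \<otimes> y"
  using x g
proof (induction x arbitrary: g rule: generate.induct)
  case one
  have "\<beta> g \<in> carrier G" using hom one unfolding cayley_color_hom_def by blast
  then have "\<beta> (g \<otimes> \<one>) = \<beta> g \<otimes> \<one>" using one by simp
  then show ?case by (blast intro: generate.one)
next
  case (incl c)
  then have "\<beta> (g \<otimes> c) = \<beta> g \<otimes> \<tau> c"
    using hom A unfolding cayley_color_hom_def by blast
  moreover have "\<tau> c \<in> generate G (\<tau> ` A)"
    using incl by (auto intro: generate.incl)
  ultimately show ?case by blast
next
  case (inv c)
  have c: "c \<in> carrier G" "c \<in> S" using inv A S by auto
  have \<tau>c: "\<tau> c \<in> carrier G" using hom c S unfolding cayley_color_hom_def by blast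
  have g': "g \<otimes> inv c \<in> carrier G" and \<beta>g': "\<beta> (g \<otimes> inv c) \<in> carrier G"
    using hom c inv.prems unfolding cayley_color_hom_def by auto
  have "\<beta> g = \<beta> ((g \<otimes> inv c) \<otimes> c)"
    using c inv.prems by (simp add: m_assoc)
  also have "\<dots> = \<beta> (g \<otimes> inv c) \<otimes> \<tau> c"
    using hom g' c unfolding cayley_color_hom_def by blast
  finally have "\<beta> (g \<otimes> inv c) = \<beta> g \<otimes> inv (\<tau> c)"
    using \<beta>g' \<tau>c by (simp add: m_assoc)
  moreover have "inv (\<tau> c) \<in> generate G (\<tau> ` A)"
    using inv.hyps by (auto intro: generate.inv)
  ultimately show ?case by blast
next
  case (eng x1 x2)
  have x1: "x1 \<in> carrier G" using eng.hyps(1) A S generate_incl by blast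
  obtain y1 where y1: "y1 \<in> generate G (\<tau> ` A)" "\<beta> (g \<otimes> x1) = \<beta> g \<otimes> y1"
    using eng.IH(1) eng.prems by blast
  obtain y2 where y2: "y2 \<in> generate G (\<tau> ` A)" "\<beta> ((g \<otimes> x1) \<otimes> x2) = \<beta> (g \<otimes> x1) \<otimes> y2"
    using eng.IH(2) eng.prems x1 by blast
  have \<tau>A: "\<tau> ` A \<subseteq> carrier G" using hom A S unfolding cayley_color_hom_def by blast
  have "x2 \<in> carrier G" "y1 \<in> carrier G" "y2 \<in> carrier G"
    using eng.hyps(2) y1(1) y2(1) A S \<tau>A generate_incl by blast+
  moreover have "\<beta> g \<in> carrier G" using hom eng.prems unfolding cayley_color_hom_def by blast
  ultimately have "\<beta> (g \<otimes> (x1 \<otimes> x2)) = \<beta> g \<otimes> (y1 \<otimes> y2)"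
    using y1(2) y2(2) eng.prems x1 by (simp add: m_assoc)
  with y1(1) y2(1) show ?case by (auto intro: generate.eng)
qed

lemma cardinal_dist_cayley_color_hom_le:
  assumes hom: "cayley_color_hom G S \<beta> \<tau>" and S: "S \<subseteq> carrier G"
    and gen: "generate G S = carrier G" and g: "g \<in> carrier G" and h: "h \<in> carrier G"
  shows "cardinal_dist G S (\<beta> g) (\<beta> h) \<le> cardinal_dist G S g h"
proof -
  obtain A where A: "A \<subseteq> S" "finite A" "card A = cardinal_dist G S g h"
    and x: "inv g \<otimes> h \<in> generate G A"
    using cardinal_norm_obtain[of "inv g \<otimes> h" S] g h gen
    unfolding cardinal_dist_def by auto
  obtain y where y: "y \<in> generate G (\<tau> ` A)" and "\<beta> (g \<otimes> (inv g \<otimes> h)) = \<beta> g \<otimes> y"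
    using cayley_color_hom_generate[OF hom S A(1) x g] by blast
  moreover have "g \<otimes> (inv g \<otimes> h) = h" and "\<beta> g \<in> carrier G"
    using g h hom unfolding cayley_color_hom_def by (auto simp: m_assoc[symmetric])
  moreover have "y \<in> carrier G"
    using y A S hom generate_incl[of "\<tau> ` A"] unfolding cayley_color_hom_def by blast
  ultimately have "inv (\<beta> g) \<otimes> \<beta> h = y" by (simp add: m_assoc[symmetric])
  moreover have "\<tau> ` A \<subseteq> S" using hom A(1) unfolding cayley_color_hom_def by blast
  ultimately have "cardinal_dist G S (\<beta> g) (\<beta> h) \<le> card (\<tau> ` A)"
    unfolding cardinal_dist_def using y A(2) by (simp add: cardinal_norm_le)
  also have "\<dots> \<le> card A" by (rule card_image_le[OF A(2)])
  finally show ?thesis using A(3) by simp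
qed

end

theorem mainTheorem11:
  fixes G (structure) and S :: "'a set" and \<alpha> :: "'a \<Rightarrow> 'a"
  assumes "group G"
    and "S \<subseteq> carrier G"
    and "generate G S = carrier G"
    and "\<one>\<^bsub>G\<^esub> \<notin> S"
    and "color_permuting_aut G S \<alpha>"
  shows "\<forall>g\<in>carrier G. \<forall>h\<in>carrier G.
           cardinal_dist G S (\<alpha> g) (\<alpha> h) = cardinal_dist G S g h"
proof -
  interpret group G by fact
  obtain \<sigma> where \<sigma>: "bij_betw \<sigma> S S" and hom: "cayley_color_hom G S \<alpha> \<sigma>"
    using color_permuting_aut_imp_cayley_color_hom[OF assms(5,2)] .
  have \<alpha>: "bij_betw \<alpha> (carrier G) (carrier G)"
    using assms(5) unfolding color_permuting_aut_def by blast
  have hom_inv: "cayley_color_hom G S (inv_into (carrier G) \<alpha>) (inv_into S \<sigma>)"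
    using cayley_color_hom_inv_into[OF hom assms(2) \<alpha> \<sigma>] .
  show ?thesis
  proof (intro ballI antisym)
    fix g h assume g: "g \<in> carrier G" and h: "h \<in> carrier G"
    show "cardinal_dist G S (\<alpha> g) (\<alpha> h) \<le> cardinal_dist G S g h"
      using cardinal_dist_cayley_color_hom_le[OF hom assms(2,3) g h] .
    have "\<alpha> g \<in> carrier G" and "\<alpha> h \<in> carrier G"
      using \<alpha> g h by (auto dest: bij_betwE)
    from cardinal_dist_cayley_color_hom_le[OF hom_inv assms(2,3) this]
    show "cardinal_dist G S g h \<le> cardinal_dist G S (\<alpha> g) (\<alpha> h)"
      using \<alpha> g h by (simp add: bij_betw_inv_into_left)
  qed
qed

end
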